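(* Let $G$ be a finite group and let $\operatorname P$ and $\operatorname R$ be projection operators on the group algebra $\mathbb C G$. If $\operatorname P$ commutes with the projection onto each group element (i.e. onto the span of each basis vector $g\in G$), and $\operatorname R$ commutes with left multiplication by every element of $G$, then $$\|\operatorname{PR}\|^2\le \frac{\operatorname{rank}\operatorname P\cdot\operatorname{rank}\operatorname R}{|G|}.$$
   Context: $\mathbb C G$ is identified with $L^2(G)$ (functions on $G$), with the group elements forming an orthonormal basis; "projection operator" means orthogonal projection (self-adjoint idempotent). Left multiplication by $x$ is $[\operatorname L_x f](y)=f(x^{-1}y)$. $\|\cdot\|$ denotes operator norm. *)

theory Defs
  imports "HOL-Analysis.Analysis" "HOL-Algebra.Group"
begin

text \<open>Operators on L2(G) = complex valued functions on the finite type 'g, represented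
  as complex matrices indexed by 'g (vectors complex^'g carry the L2 norm).\<close>

definition basis_proj :: "'g::finite \<Rightarrow> complex^'g^'g" where
  "basis_proj g = (\<chi> i j. if i = g \<and> j = g then 1 else 0)"

definition left_mult :: "('g::finite, 'b) monoid_scheme \<Rightarrow> 'g \<Rightarrow> complex^'g^'g" where
  "left_mult G x = (\<chi> y z. if z = inv\<^bsub>G\<^esub> x \<otimes>\<^bsub>G\<^esub> y then 1 else 0)"

definition adjoint_mat :: "complex^'n^'n \<Rightarrow> complex^'n^'n" where
  "adjoint_mat A = (\<chi> i j. cnj (A $ j $ i))"

definition is_projection :: "complex^'n^'n \<Rightarrow> bool" where
  "is_projection A \<longleftrightarrow> A ** A = A \<and> adjoint_mat A = A"

definition crank :: "complex^'n^'n \<Rightarrow> nat" where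
  "crank A = vector_space.dim (\<lambda>c (v::complex^'n). c *s v) (range (\<lambda>v. A *v v))"

end

theory Submission
  imports Defs
begin

text \<open>The operator norm is dominated by the Hilbert--Schmidt norm, whose square is
  \<open>tr((PR)\<^sup>*PR) = tr(RPR) = tr(PR)\<close>. Since \<open>P\<close> is diagonal, \<open>tr(PR) = \<Sum>\<^sub>g P\<^sub>g\<^sub>g R\<^sub>g\<^sub>g\<close>, and left
  invariance forces the diagonal of \<open>R\<close> to be constant, equal to \<open>tr R / |G|\<close>. Hence
  \<open>\<parallel>PR\<parallel>\<^sup>2 \<le> tr P \<cdot> tr R / |G|\<close>, and the trace of an idempotent matrix is its rank.\<close>

lemma onorm_matrix_le_frobenius:
  fixes A :: "'a::{euclidean_space,real_normed_div_algebra}^'n^'m"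
  shows "(onorm ((*v) A))\<^sup>2 \<le> (\<Sum>i\<in>UNIV. \<Sum>j\<in>UNIV. (norm (A$i$j))\<^sup>2)"
proof -
  define F where "F = (\<Sum>i\<in>UNIV. \<Sum>j\<in>UNIV. (norm (A$i$j))\<^sup>2)"
  have row_bound: "(norm ((A *v v)$i))\<^sup>2 \<le> (\<Sum>j\<in>UNIV. (norm (A$i$j))\<^sup>2) * (norm v)\<^sup>2" for v i
  proof -
    have "norm ((A *v v)$i) \<le> (\<Sum>j\<in>UNIV. norm (A$i$j) * norm (v$j))"
      unfolding matrix_vector_mult_def by (simp add: norm_mult[symmetric] sum_norm_le)
    also have "\<dots> \<le> L2_set (\<lambda>j. norm (A$i$j)) UNIV * L2_set (\<lambda>j. norm (v$j)) UNIV"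
      using L2_set_mult_ineq[of "\<lambda>j. norm (A$i$j)" "\<lambda>j. norm (v$j)" UNIV] by simp
    finally have "norm ((A *v v)$i) \<le> L2_set (\<lambda>j. norm (A$i$j)) UNIV * norm v"
      by (simp add: norm_vec_def)
    then have "(norm ((A *v v)$i))\<^sup>2 \<le> (L2_set (\<lambda>j. norm (A$i$j)) UNIV * norm v)\<^sup>2"
      by (rule power_mono) simp
    then show ?thesis
      by (simp add: power_mult_distrib L2_set_def sum_nonneg)
  qed
  have "norm (A *v v) \<le> sqrt F * norm v" for v
  proof -
    have "(norm (A *v v))\<^sup>2 = (\<Sum>i\<in>UNIV. (norm ((A *v v)$i))\<^sup>2)"
      by (simp add: norm_vec_def L2_set_def sum_nonneg)
    also have "\<dots> \<le> (\<Sum>i\<in>UNIV. (\<Sum>j\<in>UNIV. (norm (A$i$j))\<^sup>2) * (norm v)\<^sup>2)"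
      by (rule sum_mono) (rule row_bound)
    also have "\<dots> = F * (norm v)\<^sup>2"
      by (simp add: F_def sum_distrib_right)
    finally have "(norm (A *v v))\<^sup>2 \<le> F * (norm v)\<^sup>2" .
    then have "sqrt ((norm (A *v v))\<^sup>2) \<le> sqrt (F * (norm v)\<^sup>2)"
      by (rule real_sqrt_le_mono)
    then show ?thesis
      by (simp add: real_sqrt_mult)
  qed
  then have "onorm ((*v) A) \<le> sqrt F"
    by (rule onorm_le)
  moreover have "0 \<le> onorm ((*v) A)"
    by (rule onorm_pos_le) simp
  ultimately have "(onorm ((*v) A))\<^sup>2 \<le> (sqrt F)\<^sup>2"
    by (rule power_mono)
  then show ?thesis
    unfolding F_def by (simp add: sum_nonneg)
qed

lemma trace_adjoint_mult_self:
  fixes A :: "complex^'n^'n"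
  shows "Re (trace (adjoint_mat A ** A)) = (\<Sum>i\<in>UNIV. \<Sum>j\<in>UNIV. (cmod (A$i$j))\<^sup>2)"
proof -
  have "trace (adjoint_mat A ** A) = (\<Sum>j\<in>UNIV. \<Sum>i\<in>UNIV. A$i$j * cnj (A$i$j))"
    by (simp add: trace_def matrix_matrix_mult_def adjoint_mat_def mult.commute)
  also have "\<dots> = (\<Sum>j\<in>UNIV. \<Sum>i\<in>UNIV. of_real ((cmod (A$i$j))\<^sup>2))"
    by (simp only: complex_norm_square)
  finally have "Re (trace (adjoint_mat A ** A)) = (\<Sum>j\<in>UNIV. \<Sum>i\<in>UNIV. (cmod (A$i$j))\<^sup>2)"
    by (simp only: Re_sum Re_complex_of_real)
  also have "\<dots> = (\<Sum>i\<in>UNIV. \<Sum>j\<in>UNIV. (cmod (A$i$j))\<^sup>2)"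
    by (rule sum.swap)
  finally show ?thesis .
qed

lemma adjoint_mat_mult: "adjoint_mat (A ** B) = adjoint_mat B ** adjoint_mat A"
  by (simp add: adjoint_mat_def matrix_matrix_mult_def vec_eq_iff mult.commute)

lemma trace_adjoint_mult_projections:
  assumes "is_projection P" and "is_projection R"
  shows "trace (adjoint_mat (P ** R) ** (P ** R)) = trace (P ** R)"
proof -
  have PP: "P ** P = P" and RR: "R ** R = R"
    and "adjoint_mat P = P" and "adjoint_mat R = R"
    using assms unfolding is_projection_def by auto
  have RPP: "R ** P ** P = R ** P"
    by (simp add: PP flip: matrix_mul_assoc)
  have "trace (adjoint_mat (P ** R) ** (P ** R)) = trace ((R ** P) ** R)"
    using \<open>adjoint_mat P = P\<close> \<open>adjoint_mat R = R\<close>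
    by (simp add: adjoint_mat_mult matrix_mul_assoc RPP)
  also have "\<dots> = trace (R ** (R ** P))"
    by (rule trace_mul_sym)
  also have "\<dots> = trace (R ** P)"
    by (simp add: RR matrix_mul_assoc)
  also have "\<dots> = trace (P ** R)"
    by (rule trace_mul_sym)
  finally show ?thesis .
qed

lemma trace_idempotent_eq_dim:
  fixes A :: "'a::field^'n^'n"
  assumes idem: "A ** A = A"
  shows "trace A = of_nat (vec.dim (range ((*v) A)))"
proof -
  obtain B where B_range: "B \<subseteq> range ((*v) A)" and indep: "vec.independent B"
    and range_span: "range ((*v) A) \<subseteq> vec.span B" and card_B: "card B = vec.dim (range ((*v) A))"
    using vec.basis_exists by blast
  have fin: "finite B"
    using indep vec.finiteI_independent by blast
  define c where "c i = vec.representation B (column i A)" for i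
  have column_span: "column i A \<in> vec.span B" for i
  proof -
    have "column i A = A *v axis i 1"
      by (simp add: matrix_vector_mult_def axis_def column_def vec_eq_iff if_distrib cong: if_cong)
    then show ?thesis
      using range_span by auto
  qed
  have entry: "A$j$i = (\<Sum>b\<in>B. c i b * b$j)" for i j
  proof -
    have "column i A = (\<Sum>b\<in>B. c i b *s b)"
      unfolding c_def by (rule vec.sum_representation_eq[symmetric]) (use indep column_span fin in auto)
    then show ?thesis
      by (simp add: column_def vec_eq_iff sum_component)
  qed
  have coeff: "(\<Sum>i\<in>UNIV. c i b * b$i) = 1" if "b \<in> B" for b
  proof -
    obtain w where "b = A *v w"
      using \<open>b \<in> B\<close> B_range by blast
    then have "A *v b = b"
      by (simp add: matrix_vector_mul_assoc idem)
    then have "1 = vec.representation B (\<Sum>i\<in>UNIV. b$i *s column i A) b"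
      using vec.representation_basis[OF indep \<open>b \<in> B\<close>] by (simp add: matrix_mult_sum)
    also have "\<dots> = (\<Sum>i\<in>UNIV. c i b * b$i)"
      unfolding c_def using indep column_span
      by (simp add: vec.representation_sum vec.representation_scale vec.span_scale mult.commute)
    finally show ?thesis by simp
  qed
  have "trace A = (\<Sum>b\<in>B. \<Sum>i\<in>UNIV. c i b * b$i)"
    unfolding trace_def entry by (rule sum.swap)
  also have "\<dots> = of_nat (card B)"
    using coeff by simp
  finally show ?thesis
    using card_B by simp
qed

lemma crank_eq_trace: "A ** A = A \<Longrightarrow> of_nat (crank A) = trace A"
  unfolding crank_def by (simp add: trace_idempotent_eq_dim)

lemma commutes_basis_proj_imp_diagonal:
  assumes "\<And>g. P ** basis_proj g = basis_proj g ** P" and "i \<noteq> j"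
  shows "P$i$j = 0"
proof -
  have "(P ** basis_proj j)$i$j = (basis_proj j ** P)$i$j"
    using assms(1) by simp
  then show ?thesis
    using \<open>i \<noteq> j\<close> by (simp add: matrix_matrix_mult_def basis_proj_def if_distrib cong: if_cong)
qed

lemma trace_mult_diagonal_const:
  fixes P R :: "'a::comm_semiring_1^'n^'n"
  assumes "\<And>i j. i \<noteq> j \<Longrightarrow> P$i$j = 0" and "\<And>i. R$i$i = c"
  shows "trace (P ** R) = trace P * c"
proof -
  have "(P ** R)$i$i = P$i$i * c" for i
  proof -
    have "(\<Sum>k\<in>UNIV. P$i$k * R$k$i) = (\<Sum>k\<in>UNIV. if k = i then P$i$i * R$i$i else 0)"
      by (rule sum.cong) (auto simp: assms(1))
    then show ?thesis
      by (simp add: matrix_matrix_mult_def assms(2))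
  qed
  then show ?thesis
    by (simp add: trace_def sum_distrib_right)
qed

lemma matrix_mult_left_mult_nth:
  fixes G :: "('g::finite, 'b) monoid_scheme"
  assumes "group G" and "carrier G = UNIV"
  shows "(A ** left_mult G x)$i$j = A$i$(x \<otimes>\<^bsub>G\<^esub> j)"
proof -
  interpret group G by fact
  have "(\<Sum>k\<in>UNIV. A$i$k * (if j = inv\<^bsub>G\<^esub> x \<otimes>\<^bsub>G\<^esub> k then 1 else 0))
      = (\<Sum>k\<in>UNIV. if k = x \<otimes>\<^bsub>G\<^esub> j then A$i$k else 0)"
    by (rule sum.cong) (auto simp: assms(2) inv_solve_left)
  then show ?thesis
    by (simp add: matrix_matrix_mult_def left_mult_def)
qed

lemma left_mult_matrix_mult_nth: "(left_mult G x ** A)$i$j = A$(inv\<^bsub>G\<^esub> x \<otimes>\<^bsub>G\<^esub> i)$j"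
proof -
  have "(\<Sum>k\<in>UNIV. (if k = inv\<^bsub>G\<^esub> x \<otimes>\<^bsub>G\<^esub> i then 1 else 0) * A$k$j)
      = (\<Sum>k\<in>UNIV. if k = inv\<^bsub>G\<^esub> x \<otimes>\<^bsub>G\<^esub> i then A$k$j else 0)"
    by (rule sum.cong) auto
  then show ?thesis
    by (simp add: matrix_matrix_mult_def left_mult_def)
qed

lemma left_invariant_diagonal_const:
  fixes G :: "('g::finite, 'b) monoid_scheme"
  assumes "group G" and "carrier G = UNIV"
    and "\<And>x. x \<in> carrier G \<Longrightarrow> R ** left_mult G x = left_mult G x ** R"
  shows "R$x$x = R$\<one>\<^bsub>G\<^esub>$\<one>\<^bsub>G\<^esub>"
proof -
  interpret group G by fact
  have "(R ** left_mult G x)$x$\<one>\<^bsub>G\<^esub> = (left_mult G x ** R)$x$\<one>\<^bsub>G\<^esub>"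
    using assms(2,3) by simp
  then show ?thesis
    using assms(2) by (simp add: matrix_mult_left_mult_nth[OF assms(1,2)] left_mult_matrix_mult_nth)
qed

theorem corollary1:
  fixes G :: "('g::finite, 'b) monoid_scheme"
    and P R :: "complex^'g^'g"
  assumes "group G" and "carrier G = UNIV"
    and "is_projection P" and "is_projection R"
    and "\<And>g. P ** basis_proj g = basis_proj g ** P"
    and "\<And>x. x \<in> carrier G \<Longrightarrow> R ** left_mult G x = left_mult G x ** R"
  shows "(onorm (\<lambda>v. (P ** R) *v v))\<^sup>2 \<le> real (crank P) * real (crank R) / real CARD('g)"
proof -
  define c where "c = R $ \<one>\<^bsub>G\<^esub> $ \<one>\<^bsub>G\<^esub>"
  have R_diag: "R$i$i = c" for i
    unfolding c_def using left_invariant_diagonal_const[OF assms(1,2,6)] .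
  have "P ** P = P" and "R ** R = R"
    using assms(3,4) unfolding is_projection_def by auto
  then have rank_P: "of_nat (crank P) = trace P" and "of_nat (crank R) = of_nat CARD('g) * c"
    by (simp_all add: crank_eq_trace trace_def R_diag)
  then have c_eq: "c = of_real (real (crank R) / real CARD('g))"
    by (simp add: field_simps)
  have "(onorm ((*v) (P ** R)))\<^sup>2 \<le> (\<Sum>i\<in>UNIV. \<Sum>j\<in>UNIV. (cmod ((P ** R)$i$j))\<^sup>2)"
    by (rule onorm_matrix_le_frobenius)
  also have "\<dots> = Re (trace (adjoint_mat (P ** R) ** (P ** R)))"
    by (rule trace_adjoint_mult_self[symmetric])
  also have "\<dots> = Re (trace (P ** R))"
    by (simp only: trace_adjoint_mult_projections[OF assms(3,4)])
  also have "trace (P ** R) = trace P * c"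
    using commutes_basis_proj_imp_diagonal[OF assms(5)] R_diag by (rule trace_mult_diagonal_const)
  finally show ?thesis
    by (simp add: c_eq flip: rank_P)
qed

end
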